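(* Let $n$ be a prime number, let $S\subseteq\{1,2,\ldots,\lfloor n/2\rfloor\}$, let $G=C_n(S)$ be the circulant graph on $S$, and let $\Delta=\Delta(G)$ be its independence complex. Then for every integer $k$ with $1\le k\le\dim\Delta$, the simplicial complex $\Delta^{[k]}$ is connected.
   Context: For $k\in\mathbb{Z}$ write $|k|_n=\min\{|k|,\,n-|k|\}$. The circulant graph $C_n(S)$ has vertex set $\mathbb{Z}_n=\{0,1,\ldots,n-1\}$ and edge set $\{\{i,j\} : |j-i|_n\in S\}$. The independence complex $\Delta(G)$ is the simplicial complex on $V(G)$ whose faces are the independent sets of $G$; the dimension of a face $F$ is $|F|-1$ and $\dim\Delta$ is the maximum dimension of a face. For $0\le k\le\dim\Delta$, $\Delta^{[k]}$ is the pure simplicial complex whose facets are exactly the faces of $\Delta$ of dimension $k$. A simplicial complex is connected if the graph formed by its vertices and its $1$-dimensional faces is connected. *)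

theory Defs
  imports "HOL-Computational_Algebra.Primes"
begin

definition cdist :: "nat \<Rightarrow> nat \<Rightarrow> nat \<Rightarrow> nat" where
  "cdist n i j = min (nat \<bar>int j - int i\<bar>) (n - nat \<bar>int j - int i\<bar>)"

definition circulant_edges :: "nat \<Rightarrow> nat set \<Rightarrow> nat set set" where
  "circulant_edges n S = {{i, j} | i j. i < n \<and> j < n \<and> cdist n i j \<in> S}"

definition ind_complex :: "'a set \<Rightarrow> 'a set set \<Rightarrow> 'a set set" where
  "ind_complex V E = {F. F \<subseteq> V \<and> (\<forall>e\<in>E. \<not> e \<subseteq> F)}"

definition complex_dim :: "'a set set \<Rightarrow> nat" where
  "complex_dim K = Max (card ` K) - 1"

definition pure_skel :: "'a set set \<Rightarrow> nat \<Rightarrow> 'a set set" where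
  "pure_skel K k = {G. \<exists>F\<in>K. card F = k + 1 \<and> G \<subseteq> F}"

definition complex_connected :: "'a set set \<Rightarrow> bool" where
  "complex_connected K \<longleftrightarrow>
     (\<forall>u v. {u} \<in> K \<longrightarrow> {v} \<in> K \<longrightarrow>
        (u, v) \<in> {(x, y). x \<noteq> y \<and> {x, y} \<in> K}\<^sup>*)"

end

theory Submission
  imports Defs "HOL-Number_Theory.Number_Theory"
begin

text \<open>
  Translation \<open>x \<mapsto> (x + t) mod n\<close> is an automorphism of \<open>C\<^sub>n(S)\<close>, so the translates of a face of
  size \<open>k + 1\<close> are again faces. If such a face contains vertices \<open>a \<noteq> b\<close>, then every pair
  \<open>{x, x + d}\<close> with \<open>d = b - a\<close> lies in a translate and is therefore an edge of the 1-skeleton of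
  \<open>\<Delta>\<^bsup>[k]\<^esup>\<close>. For prime \<open>n\<close> the step \<open>d\<close> generates \<open>\<int>\<^sub>n\<close>, so these edges alone connect all vertices.
\<close>

definition one_skeleton :: "'a set set \<Rightarrow> ('a \<times> 'a) set" where
  "one_skeleton K = {(x, y). x \<noteq> y \<and> {x, y} \<in> K}"

lemma complex_connected_iff_one_skeleton:
  "complex_connected K \<longleftrightarrow> (\<forall>u v. {u} \<in> K \<longrightarrow> {v} \<in> K \<longrightarrow> (u, v) \<in> (one_skeleton K)\<^sup>*)"
  by (simp add: complex_connected_def one_skeleton_def)

lemma cdist_commute: "cdist n i j = cdist n j i"
  by (simp add: cdist_def abs_minus_commute)

lemma cdist_eq_min_mod_le:
  assumes "i \<le> j" "j < n"
  shows "cdist n i j = min (nat ((int j - int i) mod int n)) (nat ((int i - int j) mod int n))"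
proof (cases "i = j")
  case False
  have "(int i - int j) mod int n = (int i - int j + int n) mod int n" by simp
  also have "\<dots> = int i - int j + int n" using assms False by (intro mod_pos_pos_trivial) auto
  finally show ?thesis using assms by (simp add: cdist_def)
qed (simp add: cdist_def)

lemma cdist_eq_min_mod:
  assumes "i < n" "j < n"
  shows "cdist n i j = min (nat ((int j - int i) mod int n)) (nat ((int i - int j) mod int n))"
  using cdist_eq_min_mod_le[of i j n] cdist_eq_min_mod_le[of j i n] assms cdist_commute[of n i j]
  by (cases "i \<le> j") (auto simp: min.commute)

lemma cdist_rotate:
  assumes "i < n" "j < n"
  shows "cdist n ((i + t) mod n) ((j + t) mod n) = cdist n i j"
proof -
  have diff: "(int ((b + t) mod n) - int ((a + t) mod n)) mod int n = (int b - int a) mod int n" for a b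
  proof -
    have "(int ((b + t) mod n) - int ((a + t) mod n)) mod int n = (int (b + t) - int (a + t)) mod int n"
      by (simp add: of_nat_mod mod_diff_eq)
    thus ?thesis by simp
  qed
  show ?thesis
    using assms cdist_eq_min_mod[OF assms] cdist_eq_min_mod[of "(i + t) mod n" n "(j + t) mod n"]
    by (simp add: diff)
qed

lemma inj_on_rotate: "inj_on (\<lambda>x::nat. (x + t) mod n) {0..<n}"
proof (rule inj_onI)
  fix x y :: nat assume "x \<in> {0..<n}" "y \<in> {0..<n}" "(x + t) mod n = (y + t) mod n"
  hence "[x = y] (mod n)" "x < n" "y < n" using cong_add_rcancel_nat by (auto simp: cong_def)
  thus "x = y" by (simp add: cong_def)
qed

lemma circulant_ind_complex_rotate:
  assumes F: "F \<in> ind_complex {0..<n} (circulant_edges n S)"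
  shows "(\<lambda>x. (x + t) mod n) ` F \<in> ind_complex {0..<n} (circulant_edges n S)"
proof -
  let ?rot = "\<lambda>x. (x + t) mod n"
  have F_sub: "F \<subseteq> {0..<n}" and F_indep: "\<forall>e\<in>circulant_edges n S. \<not> e \<subseteq> F"
    using F by (auto simp: ind_complex_def)
  have "\<not> e \<subseteq> ?rot ` F" if e: "e \<in> circulant_edges n S" for e
  proof
    assume sub: "e \<subseteq> ?rot ` F"
    obtain p q where pq: "e = {p, q}" "cdist n p q \<in> S"
      using e by (auto simp: circulant_edges_def)
    then obtain i j where ij: "i \<in> F" "j \<in> F" "p = ?rot i" "q = ?rot j"
      using sub by blast
    have "i < n" "j < n" using ij F_sub by auto
    hence "cdist n i j \<in> S" using pq ij cdist_rotate[of i n j t] by simp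
    hence "{i, j} \<in> circulant_edges n S"
      using \<open>i < n\<close> \<open>j < n\<close> unfolding circulant_edges_def by blast
    thus False using F_indep ij by auto
  qed
  moreover have "n > 0" if "F \<noteq> {}" using that F_sub by auto
  ultimately show ?thesis using F_sub by (auto simp: ind_complex_def)
qed

lemma ind_complex_finite: "finite V \<Longrightarrow> finite (ind_complex V E)"
  by (rule finite_subset[of _ "Pow V"]) (auto simp: ind_complex_def)

lemma ind_complex_subset_closed: "F \<in> ind_complex V E \<Longrightarrow> G \<subseteq> F \<Longrightarrow> G \<in> ind_complex V E"
  unfolding ind_complex_def by blast

lemma empty_in_ind_complex: "{} \<notin> E \<Longrightarrow> {} \<in> ind_complex V E"
  by (auto simp: ind_complex_def)

lemma complex_dim_ex_face:
  assumes "finite K" "K \<noteq> {}" "\<And>F G. F \<in> K \<Longrightarrow> G \<subseteq> F \<Longrightarrow> G \<in> K"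
    and "1 \<le> k" "k \<le> complex_dim K"
  shows "\<exists>F\<in>K. card F = Suc k"
proof -
  have "Max (card ` K) \<in> card ` K" using assms(1,2) by simp
  then obtain F0 where F0: "F0 \<in> K" "card F0 = Max (card ` K)" by auto
  have "Suc k \<le> card F0" using assms(4,5) F0(2) by (simp add: complex_dim_def)
  then obtain F where "F \<subseteq> F0" "card F = Suc k" by (meson obtain_subset_with_card_n)
  thus ?thesis using assms(3) F0(1) by blast
qed

lemma rtrancl_add_mod_coprime:
  fixes n d :: nat
  assumes "coprime d n" and step: "\<And>x. x < n \<Longrightarrow> (x, (x + d) mod n) \<in> R"
    and "u < n" "v < n"
  shows "(u, v) \<in> R\<^sup>*"
proof -
  have reach: "(u, (u + m * d) mod n) \<in> R\<^sup>*" for m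
  proof (induction m)
    case (Suc m)
    have "((u + m * d) mod n, ((u + m * d) mod n + d) mod n) \<in> R"
      using step \<open>u < n\<close> by simp
    moreover have "((u + m * d) mod n + d) mod n = (u + Suc m * d) mod n"
      by (simp add: mod_add_left_eq) (simp add: algebra_simps)
    ultimately show ?case using Suc.IH by (metis rtrancl_into_rtrancl)
  qed (simp add: \<open>u < n\<close>)
  obtain z where z: "[d * z = 1] (mod n)" using cong_solve_coprime_nat[OF assms(1)] by auto
  have "[d * z * (v + n - u) = 1 * (v + n - u)] (mod n)" using z by (rule cong_mult) simp
  hence "[u + z * (v + n - u) * d = u + (v + n - u)] (mod n)"
    by (intro cong_add) (auto simp: algebra_simps)
  hence "(u + z * (v + n - u) * d) mod n = v" using assms(3,4) by (simp add: cong_def)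
  thus ?thesis using reach by metis
qed

lemma circulant_skel_edge_rotate:
  assumes F: "F \<in> ind_complex {0..<n} (circulant_edges n S)" "card F = Suc k"
    and ab: "a \<in> F" "b \<in> F" "a \<noteq> b"
  shows "((a + t) mod n, (b + t) mod n)
           \<in> one_skeleton (pure_skel (ind_complex {0..<n} (circulant_edges n S)) k)"
proof -
  let ?rot = "\<lambda>x. (x + t) mod n"
  have F_sub: "F \<subseteq> {0..<n}" using F(1) by (auto simp: ind_complex_def)
  have inj: "inj_on ?rot F" using inj_on_subset[OF inj_on_rotate F_sub] .
  have "card (?rot ` F) = Suc k" using card_image[OF inj] F(2) by simp
  moreover have "{?rot a, ?rot b} \<subseteq> ?rot ` F" using ab by blast
  ultimately have "{?rot a, ?rot b} \<in> pure_skel (ind_complex {0..<n} (circulant_edges n S)) k"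
    using circulant_ind_complex_rotate[OF F(1)] unfolding pure_skel_def by auto
  moreover have "?rot a \<noteq> ?rot b" using inj ab by (auto dest: inj_onD)
  ultimately show ?thesis by (simp add: one_skeleton_def)
qed

lemma coprime_diff_add_prime:
  fixes a b n :: nat
  assumes "prime n" "a < n" "b < n" "a \<noteq> b"
  shows "coprime (b + n - a) n"
proof -
  have "\<not> n dvd b + n - a"
  proof
    assume "n dvd b + n - a"
    then obtain c where c: "b + n - a = n * c" ..
    moreover have "0 < b + n - a" "b + n - a < 2 * n" using assms(2,3) by auto
    ultimately have "0 < c" "c < 2" by (auto simp: mult.commute)
    thus False using c assms(2-4) by (simp add: less_2_cases_iff)
  qed
  thus ?thesis using prime_imp_coprime[OF assms(1)] coprime_commute by blast
qed

theorem lemma3p2: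
  fixes n k :: nat and S :: "nat set"
  assumes "prime n"
    and "S \<subseteq> {1..n div 2}"
    and "1 \<le> k"
    and "k \<le> complex_dim (ind_complex {0..<n} (circulant_edges n S))"
  shows "complex_connected (pure_skel (ind_complex {0..<n} (circulant_edges n S)) k)"
proof -
  let ?K = "ind_complex {0..<n} (circulant_edges n S)"
  have "{} \<notin> circulant_edges n S" by (auto simp: circulant_edges_def)
  hence "?K \<noteq> {}" using empty_in_ind_complex by blast
  have "\<exists>F\<in>?K. card F = Suc k"
    by (rule complex_dim_ex_face)
      (use \<open>?K \<noteq> {}\<close> assms(3,4) in \<open>auto simp: ind_complex_finite intro: ind_complex_subset_closed\<close>)
  then obtain F where F: "F \<in> ?K" "card F = Suc k" ..
  have "finite F" "\<not> card F \<le> Suc 0" using F(2) assms(3) card.infinite by force+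
  then obtain a b where ab: "a \<in> F" "b \<in> F" "a \<noteq> b" by (auto simp: card_le_Suc0_iff_eq)
  have "a < n" "b < n" using ab F(1) by (auto simp: ind_complex_def)
  have step: "(x, (x + (b + n - a)) mod n) \<in> one_skeleton (pure_skel ?K k)" if "x < n" for x
  proof -
    have "a + (x + n - a) = x + n" "b + (x + n - a) = x + (b + n - a)" using \<open>a < n\<close> by simp_all
    thus ?thesis using circulant_skel_edge_rotate[OF F ab, of "x + n - a"] that by simp
  qed
  have vertex: "u < n" if "{u} \<in> pure_skel ?K k" for u
    using that by (auto simp: pure_skel_def ind_complex_def)
  show ?thesis
    unfolding complex_connected_iff_one_skeleton
    using rtrancl_add_mod_coprime[OF coprime_diff_add_prime[OF assms(1) \<open>a < n\<close> \<open>b < n\<close> ab(3)] step]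
      vertex by blast
qed

end
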